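(* Let $(X,d)$ be a complete metric space. Let $F:(0,\infty)\to\mathbb{R}$ be nondecreasing and let $\varphi:(0,\infty)\to(0,\infty)$ satisfy: $(iii')$ for every $t>0$ and every sequence $(t_n)\subset(t,\infty)$ with $t_n\to t$, $\limsup_{n\to\infty}\varphi(t_n)>0$. If $T:X\to X$ satisfies, for all $x,y\in X$ with $Tx\neq Ty$, $$\varphi(d(x,y))+F(d(Tx,Ty))\le F(d(x,y)),$$ then $T$ is a Picard operator.
   Context: $T$ is a Picard operator if $T$ has a unique fixed point $u\in X$ and for every $x\in X$ the sequence $(T^nx)_{n\in\mathbb{N}}$ converges to $u$. *)

theory Defs
  imports "HOL-Analysis.Analysis"
begin

definition picard_operator :: "('a::metric_space \<Rightarrow> 'a) \<Rightarrow> bool" where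
  "picard_operator T \<longleftrightarrow>
     (\<exists>u. T u = u \<and> (\<forall>v. T v = v \<longrightarrow> v = u) \<and>
          (\<forall>x. (\<lambda>n. (T ^^ n) x) \<longlonglongrightarrow> u))"

end

theory Submission
  imports Defs
begin

text \<open>Condition (iii') forbids F from increasing by at least \<open>\<phi> s\<close> on arbitrarily short
  intervals \<open>(r, s)\<close> just above a level \<open>e > 0\<close>: intervals of this kind accumulating at \<open>e\<close>
  would make the values \<open>\<phi> s\<close> summable, their sum telescoping against the increments of
  the monotone F. Consequently T satisfies a Meir--Keeler type condition: for every
  \<open>e > 0\<close> there is \<open>\<delta> > 0\<close> such that \<open>d(x,y) < e + \<delta>\<close> implies \<open>d(Tx,Ty) \<le> e\<close>.
  Together with the strict contractivity \<open>d(Tx,Ty) < d(x,y)\<close> this makes every orbit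
  Cauchy, and its limit is the unique fixed point.\<close>

lemma summable_if_le_decrements:
  fixes a b :: "nat \<Rightarrow> real"
  assumes "\<And>n. 0 \<le> a n" and "\<And>n. a n \<le> b n - b (Suc n)" and "\<And>n. c \<le> b n"
  shows "summable a"
proof (rule summableI_nonneg_bounded)
  fix n
  have "(\<Sum>i<n. a i) \<le> (\<Sum>i<n. b i - b (Suc i))"
    by (intro sum_mono assms(2))
  also have "\<dots> = b 0 - b n"
    by (rule sum_lessThan_telescope')
  also have "\<dots> \<le> b 0 - c"
    using assms(3) by simp
  finally show "(\<Sum>i<n. a i) \<le> b 0 - c" .
qed (fact assms(1))

locale F_contraction_functions =
  fixes F \<phi> :: "real \<Rightarrow> real"
  assumes F_mono: "mono_on {0<..} F"
    and \<phi>_pos: "\<And>t. t > 0 \<Longrightarrow> \<phi> t > 0"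
    and \<phi>_iii': "\<And>t s. t > 0 \<Longrightarrow> (\<forall>n. s n > t) \<Longrightarrow> s \<longlonglongrightarrow> t \<Longrightarrow>
                   limsup (\<lambda>n. ereal (\<phi> (s n))) > 0"
begin

lemma \<phi>_not_tendsto_zero:
  assumes "e > 0" and "\<And>n. s n > e" and "s \<longlonglongrightarrow> e"
  shows "\<not> (\<lambda>n. \<phi> (s n)) \<longlonglongrightarrow> 0"
proof
  assume "(\<lambda>n. \<phi> (s n)) \<longlonglongrightarrow> 0"
  then have "limsup (\<lambda>n. ereal (\<phi> (s n))) = 0"
    by (simp add: lim_imp_Limsup zero_ereal_def)
  with \<phi>_iii' assms show False
    by force
qed

lemma F_increment_less_\<phi>_near:
  assumes e: "e > 0"
  shows "\<exists>\<delta>>0. \<forall>r s. e < r \<longrightarrow> r < s \<longrightarrow> s < e + \<delta> \<longrightarrow> F s - F r < \<phi> s"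
proof (rule ccontr)
  assume "\<not> ?thesis"
  then have bad: "\<exists>s r. e < r \<and> r < s \<and> s < e + \<delta> \<and> \<phi> s \<le> F s - F r" if "\<delta> > 0" for \<delta>
    using that by (meson not_le)
  define good where "good n p \<longleftrightarrow> e < snd p \<and> snd p < fst p \<and>
    fst p < e + inverse (real (Suc n)) \<and> \<phi> (fst p) \<le> F (fst p) - F (snd p)" for n p
  have "\<exists>p. \<forall>n. good n (p n) \<and> fst (p (Suc n)) < snd (p n)"
  proof (rule dependent_nat_choice)
    show "\<exists>p. good 0 p"
      using bad[of 1] by (auto simp: good_def)
  next
    fix p n
    assume "good n p"
    define \<delta> where "\<delta> = min (inverse (real (Suc (Suc n)))) (snd p - e)"
    have "\<delta> > 0"
      using \<open>good n p\<close> by (simp add: good_def \<delta>_def)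
    with bad obtain s r where "e < r" "r < s" "s < e + \<delta>" "\<phi> s \<le> F s - F r"
      by blast
    moreover have "\<delta> \<le> inverse (real (Suc (Suc n)))" "\<delta> \<le> snd p - e"
      by (simp_all add: \<delta>_def)
    ultimately show "\<exists>q. good (Suc n) q \<and> fst q < snd p"
      by (intro exI[of _ "(s, r)"]) (simp add: good_def)
  qed
  then obtain p where p: "\<And>n. good n (p n)" and nested: "\<And>n. fst (p (Suc n)) < snd (p n)"
    by blast
  define s where "s n = fst (p n)" for n
  have s_gt: "s n > e" for n
    using p[of n] by (simp add: s_def good_def)
  have s_lt: "s n < e + inverse (real (Suc n))" for n
    using p[of n] by (simp add: s_def good_def)
  have s_lim: "s \<longlonglongrightarrow> e"
  proof (rule tendsto_sandwich[OF _ _ tendsto_const LIMSEQ_inverse_real_of_nat_add])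
    show "\<forall>\<^sub>F n in sequentially. e \<le> s n"
      by (intro always_eventually allI less_imp_le s_gt)
    show "\<forall>\<^sub>F n in sequentially. s n \<le> e + inverse (real (Suc n))"
      using s_lt by (simp add: less_imp_le)
  qed
  have "summable (\<lambda>n. \<phi> (s n))"
  proof (rule summable_if_le_decrements)
    show "0 \<le> \<phi> (s n)" for n
      using \<phi>_pos[of "s n"] s_gt[of n] e by simp
    show "\<phi> (s n) \<le> F (s n) - F (s (Suc n))" for n
    proof -
      have "F (s (Suc n)) \<le> F (snd (p n))"
        using nested[of n] s_gt[of "Suc n"] e by (intro mono_onD[OF F_mono]) (auto simp: s_def)
      then show ?thesis
        using p[of n] by (simp add: s_def good_def)
    qed
    show "F e \<le> F (s n)" for n
      using s_gt[of n] e by (intro mono_onD[OF F_mono]) auto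
  qed
  from summable_LIMSEQ_zero[OF this] \<phi>_not_tendsto_zero[OF e s_gt s_lim] show False
    by contradiction
qed

end

definition contractive :: "('a::metric_space \<Rightarrow> 'a) \<Rightarrow> bool" where
  "contractive T \<longleftrightarrow> (\<forall>x y. x \<noteq> y \<longrightarrow> dist (T x) (T y) < dist x y)"

definition weak_meir_keeler :: "('a::metric_space \<Rightarrow> 'a) \<Rightarrow> bool" where
  "weak_meir_keeler T \<longleftrightarrow>
     (\<forall>e>0. \<exists>\<delta>>0. \<forall>x y. dist x y < e + \<delta> \<longrightarrow> dist (T x) (T y) \<le> e)"

lemma contractive_dist_le: "contractive T \<Longrightarrow> dist (T x) (T y) \<le> dist x y"
  unfolding contractive_def by (cases "x = y") (auto intro: less_imp_le)

lemma contractive_fixpoint_unique: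
  assumes "contractive T" and "T u = u" and "T v = v"
  shows "u = v"
proof (rule ccontr)
  assume "u \<noteq> v"
  with assms(1) have "dist (T u) (T v) < dist u v"
    by (simp add: contractive_def)
  with assms(2,3) show False
    by simp
qed

lemma contractive_continuous_on:
  assumes "contractive T"
  shows "continuous_on S T"
  by (rule lipschitz_on_continuous_on[of 1], rule lipschitz_onI)
    (simp_all add: contractive_dist_le[OF assms])

lemma weak_meir_keelerE:
  assumes "weak_meir_keeler T" and "e > 0"
  obtains \<delta> where "\<delta> > 0" and "\<delta> \<le> e"
    and "\<And>x y. dist x y < e + \<delta> \<Longrightarrow> dist (T x) (T y) \<le> e"
proof -
  obtain \<delta> where "\<delta> > 0" and shrink: "\<forall>x y. dist x y < e + \<delta> \<longrightarrow> dist (T x) (T y) \<le> e"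
    using assms unfolding weak_meir_keeler_def by blast
  have "min \<delta> e \<le> \<delta>"
    by simp
  with shrink have "dist (T x) (T y) \<le> e" if "dist x y < e + min \<delta> e" for x y
    using that by force
  with \<open>\<delta> > 0\<close> \<open>e > 0\<close> show thesis
    by (intro that[of "min \<delta> e"]) auto
qed

context
  fixes T :: "'a::metric_space \<Rightarrow> 'a"
  assumes contractive: "contractive T"
    and weak_meir_keeler: "weak_meir_keeler T"
begin

lemma orbit_step_dist_tendsto_zero: "(\<lambda>n. dist ((T ^^ n) x) ((T ^^ Suc n) x)) \<longlonglongrightarrow> 0"
proof -
  define d where "d n = dist ((T ^^ n) x) ((T ^^ Suc n) x)" for n
  have "decseq d"
    by (rule decseq_SucI) (simp add: d_def contractive_dist_le[OF contractive])
  then obtain L where d_lim: "d \<longlonglongrightarrow> L" and L_le: "\<And>n. L \<le> d n"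
    by (rule decseq_convergent[where B = 0]) (auto simp: d_def)
  have "L \<le> 0"
  proof (rule ccontr)
    assume "\<not> L \<le> 0"
    then obtain \<delta> where "\<delta> > 0" and shrink: "\<And>x y. dist x y < L + \<delta> \<Longrightarrow> dist (T x) (T y) \<le> L"
      using weak_meir_keelerE[OF weak_meir_keeler] by (metis not_le)
    have "\<forall>\<^sub>F n in sequentially. d n < L + \<delta>"
      using order_tendstoD(2)[OF d_lim] \<open>\<delta> > 0\<close> by simp
    then obtain n where "d n < L + \<delta>"
      using eventually_happens'[OF sequentially_bot] by blast
    then have "d (Suc n) \<le> L"
      using shrink by (simp add: d_def)
    moreover have "(T ^^ Suc n) x \<noteq> (T ^^ Suc (Suc n)) x"
      using L_le[of "Suc n"] \<open>\<not> L \<le> 0\<close> by (auto simp: d_def)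
    then have "d (Suc (Suc n)) < d (Suc n)"
      using contractive unfolding contractive_def d_def by simp
    ultimately show False
      using L_le[of "Suc (Suc n)"] by simp
  qed
  moreover have "0 \<le> L"
    using d_lim by (rule LIMSEQ_le_const) (simp add: d_def)
  ultimately show ?thesis
    using d_lim unfolding d_def by simp
qed

lemma orbit_Cauchy: "Cauchy (\<lambda>n. (T ^^ n) x)"
proof (rule metric_CauchyI)
  fix e :: real
  assume "e > 0"
  then obtain \<delta> where "\<delta> > 0" and "\<delta> \<le> e / 4"
    and shrink: "\<And>x y. dist x y < e / 4 + \<delta> \<Longrightarrow> dist (T x) (T y) \<le> e / 4"
    using weak_meir_keelerE[OF weak_meir_keeler, of "e / 4"] by auto
  have "\<forall>\<^sub>F n in sequentially. dist ((T ^^ n) x) ((T ^^ Suc n) x) < \<delta>"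
    using order_tendstoD(2)[OF orbit_step_dist_tendsto_zero] \<open>\<delta> > 0\<close> by simp
  then obtain N where step_N: "dist ((T ^^ N) x) ((T ^^ Suc N) x) < \<delta>"
    using eventually_happens'[OF sequentially_bot] by blast
  \<comment> \<open>The orbit never leaves the ball of radius \<open>e/4 + \<delta>\<close> about the \<open>N\<close>-th point:
    points inside are mapped to within \<open>e/4\<close> of the next one, which is \<open>\<delta>\<close>-close.\<close>
  have stay: "dist ((T ^^ N) x) ((T ^^ (N + k)) x) < e / 4 + \<delta>" for k
  proof (induction k)
    case 0
    show ?case
      using \<open>\<delta> > 0\<close> \<open>e > 0\<close> by simp
  next
    case (Suc k)
    have "dist ((T ^^ Suc N) x) ((T ^^ (N + Suc k)) x) \<le> e / 4"
      using shrink[OF Suc.IH] by simp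
    then show ?case
      using dist_triangle[of "(T ^^ N) x" "(T ^^ (N + Suc k)) x" "(T ^^ Suc N) x"] step_N
      by linarith
  qed
  have "dist ((T ^^ m) x) ((T ^^ n) x) < e" if "m \<ge> N" "n \<ge> N" for m n
  proof -
    have "dist ((T ^^ m) x) ((T ^^ n) x) \<le> dist ((T ^^ N) x) ((T ^^ m) x) + dist ((T ^^ N) x) ((T ^^ n) x)"
      by (rule dist_triangle3)
    also have "\<dots> < 2 * (e / 4 + \<delta>)"
      using stay[of "m - N"] stay[of "n - N"] that by simp
    also have "\<dots> \<le> e"
      using \<open>\<delta> \<le> e / 4\<close> by simp
    finally show ?thesis .
  qed
  then show "\<exists>M. \<forall>m\<ge>M. \<forall>n\<ge>M. dist ((T ^^ m) x) ((T ^^ n) x) < e"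
    by blast
qed

end

theorem picard_operator_if_weak_meir_keeler:
  fixes T :: "'a::complete_space \<Rightarrow> 'a"
  assumes "contractive T" and "weak_meir_keeler T"
  shows "picard_operator T"
proof -
  have orbit_to_fixpoint: "\<exists>u. T u = u \<and> (\<lambda>n. (T ^^ n) x) \<longlonglongrightarrow> u" for x
  proof -
    obtain u where u: "(\<lambda>n. (T ^^ n) x) \<longlonglongrightarrow> u"
      using orbit_Cauchy[OF assms] Cauchy_convergent_iff convergent_def by blast
    have "isCont T u"
      using contractive_continuous_on[OF assms(1), of UNIV] by (simp add: continuous_on_eq_continuous_at)
    then have "(\<lambda>n. T ((T ^^ n) x)) \<longlonglongrightarrow> T u"
      using u by (rule isCont_tendsto_compose)
    moreover have "(\<lambda>n. T ((T ^^ n) x)) \<longlonglongrightarrow> u"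
      using LIMSEQ_Suc[OF u] by simp
    ultimately show ?thesis
      using u LIMSEQ_unique by blast
  qed
  then obtain u where "T u = u"
    by blast
  then show ?thesis
    unfolding picard_operator_def
    using orbit_to_fixpoint contractive_fixpoint_unique[OF assms(1)] by metis
qed

locale F_contraction = F_contraction_functions +
  fixes T :: "'a::metric_space \<Rightarrow> 'a"
  assumes contr: "\<And>x y. T x \<noteq> T y \<Longrightarrow> \<phi> (dist x y) + F (dist (T x) (T y)) \<le> F (dist x y)"
begin

lemma T_contractive: "contractive T"
  unfolding contractive_def
proof (intro allI impI)
  fix x y :: 'a
  assume "x \<noteq> y"
  show "dist (T x) (T y) < dist x y"
  proof (cases "T x = T y")
    case True
    then show ?thesis
      using \<open>x \<noteq> y\<close> by simp
  next
    case False
    have F_less: "F (dist (T x) (T y)) < F (dist x y)"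
      using contr[OF False] \<phi>_pos[of "dist x y"] \<open>x \<noteq> y\<close> by simp
    have "dist (T x) (T y) \<in> {0<..}" and "dist x y \<in> {0<..}"
      using False \<open>x \<noteq> y\<close> by simp_all
    then show ?thesis
      using F_less by (rule mono_on_strict_invE[OF F_mono])
  qed
qed

lemma T_weak_meir_keeler: "weak_meir_keeler T"
  unfolding weak_meir_keeler_def
proof (intro allI impI)
  fix e :: real
  assume "e > 0"
  then obtain \<delta> where "\<delta> > 0"
    and small_increment: "\<And>r s. e < r \<Longrightarrow> r < s \<Longrightarrow> s < e + \<delta> \<Longrightarrow> F s - F r < \<phi> s"
    using F_increment_less_\<phi>_near by blast
  have "dist (T x) (T y) \<le> e" if close: "dist x y < e + \<delta>" for x y
  proof (rule ccontr)
    assume far: "\<not> dist (T x) (T y) \<le> e"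
    then have "T x \<noteq> T y"
      using \<open>e > 0\<close> by auto
    then have "x \<noteq> y"
      by auto
    with T_contractive have "dist (T x) (T y) < dist x y"
      by (simp add: contractive_def)
    then have "F (dist x y) - F (dist (T x) (T y)) < \<phi> (dist x y)"
      using small_increment far close by simp
    with contr[OF \<open>T x \<noteq> T y\<close>] show False
      by simp
  qed
  with \<open>\<delta> > 0\<close> show "\<exists>\<delta>>0. \<forall>x y. dist x y < e + \<delta> \<longrightarrow> dist (T x) (T y) \<le> e"
    by blast
qed

end

theorem mainTheorem5:
  fixes T :: "'a::complete_space \<Rightarrow> 'a"
    and F :: "real \<Rightarrow> real"
    and \<phi> :: "real \<Rightarrow> real"
  assumes F_mono: "mono_on {0<..} F"
    and \<phi>_pos: "\<And>t. t > 0 \<Longrightarrow> \<phi> t > 0"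
    and \<phi>_iii': "\<And>t s. t > 0 \<Longrightarrow> (\<forall>n. s n > t) \<Longrightarrow> s \<longlonglongrightarrow> t \<Longrightarrow>
                   limsup (\<lambda>n. ereal (\<phi> (s n))) > 0"
    and contr: "\<And>x y. T x \<noteq> T y \<Longrightarrow>
                   \<phi> (dist x y) + F (dist (T x) (T y)) \<le> F (dist x y)"
  shows "picard_operator T"
proof -
  interpret F_contraction F \<phi> T
    by unfold_locales (fact assms)+
  show ?thesis
    by (rule picard_operator_if_weak_meir_keeler[OF T_contractive T_weak_meir_keeler])
qed

end
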